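(* Let $d\in\mathbb{N}$, $d\geq 1$. There is no $d$-dimensional freezing cellular automaton $F$ such that, for every $d$-dimensional freezing cellular automaton $G$ with von Neumann neighborhood $\mathrm{VN}_d$, $F$ simulates $G$ with context $C=\{\vec 0\}$ (for some slowdown $T>0$ and some rectangular block $B$).
   Context: A $d$-dimensional cellular automaton (CA) is $F=(d,Q,N,f)$ with $Q$ a finite state set, $N\subset\mathbb{Z}^d$ a finite neighborhood and $f:Q^N\to Q$; its global map on $Q^{\mathbb{Z}^d}$ is $F(c)_z=f(c|_{z+N})$. A CA is $\preceq$-freezing for a partial order $\preceq$ on $Q$ if $F(c)_z\preceq c_z$ for every configuration $c$ and cell $z$; it is freezing if it is $\preceq$-freezing for some partial order. The von Neumann neighborhood is $\mathrm{VN}_d=\{\vec 0,\pm e_1,\dots,\pm e_d\}$ where $e_1,\dots,e_d$ is the canonical basis. Simulation: let $F=(d,Q_F,N,f)$, $G=(d,Q_G,N',g)$, $T>0$, $B\subseteq\mathbb{Z}^d$ a rectangular block with size-vector $b\in\mathbb{Z}^d$, and $C\subset\mathbb{Z}^d$ finite with $\vec0\in C$. $F$ simulates $G$ with slowdown $T$, block $B$ and context $C$ if there is a map $\phi:Q_G^C\to Q_F^B$ such that the map $\bar\phi:Q_G^{\mathbb{Z}^d}\to Q_F^{\mathbb{Z}^d}$ defined by $\bar\phi(c)_{bz+r}=\phi(c|_{z+C})_r$ for $z\in\mathbb{Z}^d$, $r\in B$ (with $bz$ the componentwise product) is injective and satisfies $\bar\phi(G(c))=F^T(\bar\phi(c))$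 for all $c$. The simulation is called context-free when $C=\{\vec 0\}$. *)

theory Defs
  imports Main "HOL-Library.FuncSet"
begin

text \<open>Cells of the lattice Z^d are functions 'd \<Rightarrow> int for a finite index type 'd
  (so d = CARD('d) \<ge> 1).\<close>

definition vplus :: "('d \<Rightarrow> int) \<Rightarrow> ('d \<Rightarrow> int) \<Rightarrow> ('d \<Rightarrow> int)" where
  "vplus z n = (\<lambda>i. z i + n i)"

definition configs :: "'q set \<Rightarrow> (('d \<Rightarrow> int) \<Rightarrow> 'q) set" where
  "configs Q = {c. \<forall>z. c z \<in> Q}"

definition pattern :: "(('d \<Rightarrow> int) \<Rightarrow> 'q) \<Rightarrow> ('d \<Rightarrow> int) \<Rightarrow> ('d \<Rightarrow> int) set
    \<Rightarrow> (('d \<Rightarrow> int) \<Rightarrow> 'q)" where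
  "pattern c z N = (\<lambda>n. if n \<in> N then c (vplus z n) else undefined)"

definition global :: "('d \<Rightarrow> int) set \<Rightarrow> ((('d \<Rightarrow> int) \<Rightarrow> 'q) \<Rightarrow> 'q)
    \<Rightarrow> (('d \<Rightarrow> int) \<Rightarrow> 'q) \<Rightarrow> (('d \<Rightarrow> int) \<Rightarrow> 'q)" where
  "global N f c = (\<lambda>z. f (pattern c z N))"

definition is_CA :: "'q set \<Rightarrow> ('d \<Rightarrow> int) set \<Rightarrow> ((('d \<Rightarrow> int) \<Rightarrow> 'q) \<Rightarrow> 'q) \<Rightarrow> bool" where
  "is_CA Q N f \<longleftrightarrow> finite Q \<and> Q \<noteq> {} \<and> finite N \<and> (\<forall>p \<in> N \<rightarrow>\<^sub>E Q. f p \<in> Q)"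

definition freezing :: "'q set \<Rightarrow> ('d \<Rightarrow> int) set \<Rightarrow> ((('d \<Rightarrow> int) \<Rightarrow> 'q) \<Rightarrow> 'q) \<Rightarrow> bool" where
  "freezing Q N f \<longleftrightarrow> (\<exists>R. partial_order_on Q R \<and>
      (\<forall>c \<in> configs Q. \<forall>z. (global N f c z, c z) \<in> R))"

definition unitv :: "'d \<Rightarrow> ('d \<Rightarrow> int)" where
  "unitv i = (\<lambda>j. if j = i then 1 else 0)"

definition VN :: "('d::finite \<Rightarrow> int) set" where
  "VN = {\<lambda>_. 0} \<union> range unitv \<union> range (\<lambda>i. (\<lambda>j. - unitv i j))"

definition block :: "('d \<Rightarrow> int) \<Rightarrow> ('d \<Rightarrow> int) set" where
  "block b = {r. \<forall>i. 0 \<le> r i \<and> r i < b i}"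

text \<open>phibar(c)_(bz+r) = phi(c|_(z+C))_r, with z = x div b, r = x mod b componentwise\<close>
definition phibar :: "('d \<Rightarrow> int) \<Rightarrow> ('d \<Rightarrow> int) set
    \<Rightarrow> ((('d \<Rightarrow> int) \<Rightarrow> 'g) \<Rightarrow> (('d \<Rightarrow> int) \<Rightarrow> 'q))
    \<Rightarrow> (('d \<Rightarrow> int) \<Rightarrow> 'g) \<Rightarrow> (('d \<Rightarrow> int) \<Rightarrow> 'q)" where
  "phibar b C \<phi> c = (\<lambda>x. \<phi> (pattern c (\<lambda>i. x i div b i) C) (\<lambda>i. x i mod b i))"

definition simulates ::
  "'q set \<Rightarrow> ('d \<Rightarrow> int) set \<Rightarrow> ((('d \<Rightarrow> int) \<Rightarrow> 'q) \<Rightarrow> 'q) \<Rightarrow>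
   'g set \<Rightarrow> ('d \<Rightarrow> int) set \<Rightarrow> ((('d \<Rightarrow> int) \<Rightarrow> 'g) \<Rightarrow> 'g) \<Rightarrow>
   nat \<Rightarrow> ('d \<Rightarrow> int) \<Rightarrow> ('d \<Rightarrow> int) set \<Rightarrow>
   ((('d \<Rightarrow> int) \<Rightarrow> 'g) \<Rightarrow> (('d \<Rightarrow> int) \<Rightarrow> 'q)) \<Rightarrow> bool" where
  "simulates QF NF fF QG NG fG T b C \<phi> \<longleftrightarrow>
     T > 0 \<and> (\<forall>i. b i > 0) \<and> finite C \<and> (\<lambda>_. 0) \<in> C \<and>
     (\<forall>p \<in> C \<rightarrow>\<^sub>E QG. \<forall>r \<in> block b. \<phi> p r \<in> QF) \<and>
     inj_on (phibar b C \<phi>) (configs QG) \<and>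
     (\<forall>c \<in> configs QG. phibar b C \<phi> (global NG fG c) = (global NF fF ^^ T) (phibar b C \<phi> c))"

end

theory Submission
  imports Defs
begin

(* Take for G the CA on {0..M} in which a cell holding at least 2
   counts down as long as both of its neighbours along some axis hold 1.

   A T-periodic configuration of a freezing CA is fixed, so the image of c is F-fixed exactly
   when c is G-fixed.  Put the counter at the origin with both axis-i neighbours 1: this
   configuration moves, but replacing either neighbour by 0 freezes it.  A cell changed by F in
   the image must therefore see both blocks adjacent to the origin block, which gives
   b i < 2 r for the radius r of the neighbourhood of F.

   On the other hand, while the counter runs down from M to 2, the images descend strictly in
   the freezing order on the origin block, which allows at most card (block b) * card Q_F
   steps.  For M above this bound (which by the first part does not depend on G) this is a
   contradiction. *)

lemma vplus_zero [simp]: "vplus z (\<lambda>_. 0) = z" "vplus (\<lambda>_. 0) z = z"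
  by (simp_all add: vplus_def)

lemma pattern_in_PiE: "c \<in> configs Q \<Longrightarrow> pattern c z N \<in> N \<rightarrow>\<^sub>E Q"
  by (auto simp: configs_def pattern_def)

lemma global_in_configs:
  assumes "is_CA Q N f" and "c \<in> configs Q"
  shows "global N f c \<in> configs Q"
proof -
  have "f (pattern c z N) \<in> Q" for z
    using assms(1) pattern_in_PiE[OF assms(2)] unfolding is_CA_def by blast
  then show ?thesis by (simp add: configs_def global_def)
qed

lemma funpow_global_in_configs:
  "is_CA Q N f \<Longrightarrow> c \<in> configs Q \<Longrightarrow> (global N f ^^ k) c \<in> configs Q"
  by (induction k) (simp_all add: global_in_configs)

lemma global_cong_at:
  assumes "c z = c' z" and "\<And>n. n \<in> N \<Longrightarrow> c (vplus z n) = c' (vplus z n)"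
  shows "global N f c z = global N f c' z"
proof -
  have "pattern c z N = pattern c' z N"
    using assms(2) by (auto simp: pattern_def)
  then show ?thesis by (simp add: global_def)
qed

lemma changed_cell_sees_difference:
  assumes "global N f c' = c'" and "global N f c x \<noteq> c x"
  shows "\<exists>n \<in> insert (\<lambda>_. 0) N. c (vplus x n) \<noteq> c' (vplus x n)"
  by (metis assms global_cong_at insertCI vplus_zero(1))

lemma freezing_if_decreasing:
  fixes f :: "(('d \<Rightarrow> int) \<Rightarrow> 'q::order) \<Rightarrow> 'q"
  assumes "is_CA Q N f" and "\<And>c z. c \<in> configs Q \<Longrightarrow> global N f c z \<le> c z"
  shows "freezing Q N f"
  unfolding freezing_def
proof (intro exI conjI ballI allI)
  let ?R = "{(x, y). x \<in> Q \<and> y \<in> Q \<and> x \<le> y}"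
  show "partial_order_on Q ?R"
    by (auto simp: partial_order_on_def preorder_on_def refl_on_def trans_def antisym_def)
  fix c :: "('d \<Rightarrow> int) \<Rightarrow> 'q" and z
  assume "c \<in> configs Q"
  then show "(global N f c z, c z) \<in> ?R"
    using assms global_in_configs[OF assms(1), of c] by (auto simp: configs_def)
qed

lemma finite_block: "finite (block (b :: 'd::finite \<Rightarrow> int))"
proof -
  have "block b = PiE UNIV (\<lambda>i. {0..<b i})"
    by (auto simp: block_def PiE_UNIV_domain)
  then show ?thesis by (simp add: finite_PiE)
qed

lemma card_block_mono:
  fixes b b' :: "'d::finite \<Rightarrow> int"
  assumes "\<And>i. b i \<le> b' i"
  shows "card (block b) \<le> card (block b')"
  using assms by (intro card_mono finite_block) (auto simp: block_def intro: less_le_trans)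

lemma block_iff_div_eq_zero:
  assumes "\<And>i. 0 < b i"
  shows "x \<in> block b \<longleftrightarrow> (\<lambda>i. x i div b i) = (\<lambda>_. 0)"
proof -
  have "x i div b i = 0 \<longleftrightarrow> 0 \<le> x i \<and> x i < b i" for i
    using assms[of i] by (auto simp: zdiv_eq_0_iff)
  then show ?thesis by (simp add: block_def fun_eq_iff)
qed

definition radius :: "('d::finite \<Rightarrow> int) set \<Rightarrow> int" where
  "radius N = Max (insert 0 ((\<lambda>(n, i). \<bar>n i\<bar>) ` (N \<times> UNIV)))"

lemma abs_le_radius:
  assumes "finite N" and "n \<in> insert (\<lambda>_. 0) N"
  shows "\<bar>n i\<bar> \<le> radius N"
proof -
  have "\<bar>n i\<bar> \<in> insert 0 ((\<lambda>(n, i). \<bar>n i\<bar>) ` (N \<times> UNIV))"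
    using assms(2) by (auto intro: image_eqI[where x = "(n, i)"])
  then show ?thesis
    unfolding radius_def using assms(1) by (simp add: Max_ge)
qed

locale freezing_ca =
  fixes Q :: "'q set" and N :: "('d \<Rightarrow> int) set" and f and R :: "'q rel"
  assumes CA: "is_CA Q N f"
    and order: "partial_order_on Q R"
    and decreasing: "c \<in> configs Q \<Longrightarrow> (global N f c z, c z) \<in> R"

lemma freezing_ca_if_freezing:
  assumes "is_CA Q N f" and "freezing Q N f"
  obtains R where "freezing_ca Q N f R"
  using assms by (auto simp: freezing_def freezing_ca_def)

context freezing_ca
begin

lemma funpow_decreasing:
  assumes "c \<in> configs Q"
  shows "((global N f ^^ k) c z, c z) \<in> R"
proof (induction k)
  case 0
  have "c z \<in> Q" using assms by (simp add: configs_def)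
  then show ?case using order by (simp add: partial_order_on_def preorder_on_def refl_on_def)
next
  case (Suc k)
  have "((global N f ^^ Suc k) c z, (global N f ^^ k) c z) \<in> R"
    using decreasing funpow_global_in_configs[OF CA assms] by simp
  with Suc.IH show ?case
    using order unfolding partial_order_on_def preorder_on_def by (metis transD)
qed

lemma fixed_if_funpow_fixed:
  assumes "c \<in> configs Q" and "0 < T" and "(global N f ^^ T) c = c"
  shows "global N f c = c"
proof
  fix z
  obtain m where "T = Suc m" using assms(2) gr0_implies_Suc by blast
  then have "(global N f ^^ m) (global N f c) = c"
    using assms(3) by (simp only: funpow_Suc_right o_apply)
  then have "(c z, global N f c z) \<in> R"
    using funpow_decreasing[OF global_in_configs[OF CA assms(1)], of m z] by simp
  moreover have "(global N f c z, c z) \<in> R"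
    using decreasing[OF assms(1)] .
  ultimately show "global N f c z = c z"
    using order unfolding partial_order_on_def by (metis antisymD)
qed

end

definition rank :: "'a set \<Rightarrow> 'a rel \<Rightarrow> 'a \<Rightarrow> nat" where
  "rank Q R a = card {a' \<in> Q. (a', a) \<in> R}"

lemma rank_le_card: "finite Q \<Longrightarrow> rank Q R a \<le> card Q"
  unfolding rank_def by (intro card_mono) auto

lemma rank_less:
  assumes "partial_order_on Q R" and "finite Q" and "(a, a') \<in> R" and "a \<noteq> a'"
  shows "rank Q R a < rank Q R a'"
proof -
  have "a' \<in> Q" and "(a', a') \<in> R" and "(a', a) \<notin> R"
    using assms by (auto simp: partial_order_on_def preorder_on_def refl_on_def antisym_def)
  moreover have "{x \<in> Q. (x, a) \<in> R} \<subseteq> {x \<in> Q. (x, a') \<in> R}"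
    using assms(1,3) by (auto simp: partial_order_on_def preorder_on_def dest: transD)
  ultimately have "{x \<in> Q. (x, a) \<in> R} \<subset> {x \<in> Q. (x, a') \<in> R}"
    by blast
  then show ?thesis
    unfolding rank_def using assms(2) by (intro psubset_card_mono) auto
qed

lemma rank_mono:
  "partial_order_on Q R \<Longrightarrow> finite Q \<Longrightarrow> (a, a') \<in> R \<Longrightarrow> rank Q R a \<le> rank Q R a'"
  by (cases "a = a'") (auto dest: rank_less)

text \<open>The potential \<Sum>r\<in>B. rank (Y k r) lies in [0, card B * card Q] and drops at every step.\<close>
lemma descending_chain_length_le:
  assumes "partial_order_on Q R" and "finite Q" and "finite B"
    and below: "\<And>k r. k < n \<Longrightarrow> r \<in> B \<Longrightarrow> (Y (Suc k) r, Y k r) \<in> R"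
    and differ: "\<And>k. k < n \<Longrightarrow> \<exists>r \<in> B. Y (Suc k) r \<noteq> Y k r"
  shows "n \<le> card B * card Q"
proof -
  define P where "P k = (\<Sum>r\<in>B. rank Q R (Y k r))" for k
  have drop: "P (Suc k) < P k" if "k < n" for k
    unfolding P_def
  proof (rule sum_strict_mono_ex1[OF \<open>finite B\<close>])
    show "\<forall>r\<in>B. rank Q R (Y (Suc k) r) \<le> rank Q R (Y k r)"
      using below[OF that] rank_mono[OF assms(1,2)] by blast
    show "\<exists>r\<in>B. rank Q R (Y (Suc k) r) < rank Q R (Y k r)"
      using differ[OF that] below[OF that] rank_less[OF assms(1,2)] by blast
  qed
  have "P k + k \<le> P 0" if "k \<le> n" for k
    using that
  proof (induction k)
    case (Suc k)
    then show ?case using drop[of k] by simp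
  qed simp
  then have "n \<le> P 0" by (metis le_add2 le_refl order_trans)
  also have "P 0 \<le> card B * card Q"
    unfolding P_def using rank_le_card[OF assms(2)] sum_bounded_above by (metis id_apply of_nat_eq_id)
  finally show ?thesis .
qed

locale context_free_simulation = F: freezing_ca QF NF fF R
  for QF :: "'q set" and NF :: "('d \<Rightarrow> int) set" and fF and R +
  fixes QG :: "'g set" and NG :: "('d \<Rightarrow> int) set" and fG and T b \<phi>
  assumes G_CA: "is_CA QG NG fG"
    and simulation: "simulates QF NF fF QG NG fG T b {\<lambda>_. 0} \<phi>"
begin

abbreviation \<Phi> :: "(('d \<Rightarrow> int) \<Rightarrow> 'g) \<Rightarrow> ('d \<Rightarrow> int) \<Rightarrow> 'q" where
  "\<Phi> \<equiv> phibar b {\<lambda>_. 0} \<phi>"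

lemma T_pos: "0 < T"
  using simulation by (simp add: simulates_def)

lemma b_pos: "0 < b i"
  using simulation by (simp add: simulates_def)

lemma \<phi>_in_QF: "p \<in> {\<lambda>_. 0} \<rightarrow>\<^sub>E QG \<Longrightarrow> r \<in> block b \<Longrightarrow> \<phi> p r \<in> QF"
  using simulation by (simp add: simulates_def)

lemma \<Phi>_apply:
  "\<Phi> c x = \<phi> (\<lambda>n. if n = (\<lambda>_. 0) then c (\<lambda>i. x i div b i) else undefined) (\<lambda>i. x i mod b i)"
  by (simp add: phibar_def pattern_def cong: if_cong)

lemma \<Phi>_local:
  assumes "c (\<lambda>i. x i div b i) = c' (\<lambda>i. x i div b i)"
  shows "\<Phi> c x = \<Phi> c' x"
  unfolding \<Phi>_apply assms ..

lemma \<Phi>_in_configs: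
  assumes "c \<in> configs QG"
  shows "\<Phi> c \<in> configs QF"
proof -
  have "\<Phi> c x \<in> QF" for x
    unfolding \<Phi>_apply
  proof (rule \<phi>_in_QF)
    show "(\<lambda>n. if n = (\<lambda>_. 0) then c (\<lambda>i. x i div b i) else undefined) \<in> {\<lambda>_. 0} \<rightarrow>\<^sub>E QG"
      using assms by (auto simp: configs_def PiE_def extensional_def)
    show "(\<lambda>i. x i mod b i) \<in> block b"
      using b_pos by (simp add: block_def)
  qed
  then show ?thesis by (simp add: configs_def)
qed

lemma \<Phi>_inj: "c \<in> configs QG \<Longrightarrow> c' \<in> configs QG \<Longrightarrow> \<Phi> c = \<Phi> c' \<Longrightarrow> c = c'"
  using simulation by (auto simp: simulates_def dest: inj_onD)

lemma \<Phi>_global: "c \<in> configs QG \<Longrightarrow> \<Phi> (global NG fG c) = (global NF fF ^^ T) (\<Phi> c)"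
  using simulation by (simp add: simulates_def)

lemma \<Phi>_global_below: "c \<in> configs QG \<Longrightarrow> (\<Phi> (global NG fG c) x, \<Phi> c x) \<in> R"
  by (simp add: \<Phi>_global F.funpow_decreasing \<Phi>_in_configs)

lemma fixed_iff_\<Phi>_fixed:
  assumes "c \<in> configs QG"
  shows "global NF fF (\<Phi> c) = \<Phi> c \<longleftrightarrow> global NG fG c = c"
proof
  assume "global NF fF (\<Phi> c) = \<Phi> c"
  then have "(global NF fF ^^ k) (\<Phi> c) = \<Phi> c" for k
    by (induction k) simp_all
  then have "\<Phi> (global NG fG c) = \<Phi> c"
    by (simp add: \<Phi>_global[OF assms])
  then show "global NG fG c = c"
    using \<Phi>_inj global_in_configs[OF G_CA assms] assms by blast
next
  assume "global NG fG c = c"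
  then have "(global NF fF ^^ T) (\<Phi> c) = \<Phi> c"
    using \<Phi>_global[OF assms] by simp
  then show "global NF fF (\<Phi> c) = \<Phi> c"
    using F.fixed_if_funpow_fixed \<Phi>_in_configs[OF assms] T_pos by blast
qed

text \<open>Outside the block of w, \<Phi> c agrees with the F-fixed configuration \<Phi> c'.\<close>
lemma changed_cell_sees_block:
  assumes "c \<in> configs QG" and "c' \<in> configs QG" and "global NG fG c' = c'"
    and "\<And>z. z \<noteq> w \<Longrightarrow> c z = c' z"
    and "global NF fF (\<Phi> c) x \<noteq> \<Phi> c x"
  shows "\<exists>n \<in> insert (\<lambda>_. 0) NF. (\<lambda>i. (x i + n i) div b i) = w"
proof -
  have "global NF fF (\<Phi> c') = \<Phi> c'"
    using fixed_iff_\<Phi>_fixed[OF assms(2)] assms(3) by simp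
  from changed_cell_sees_difference[OF this assms(5)]
  obtain n where n: "n \<in> insert (\<lambda>_. 0) NF" "\<Phi> c (vplus x n) \<noteq> \<Phi> c' (vplus x n)"
    by blast
  have "(\<lambda>i. vplus x n i div b i) = w"
  proof (rule ccontr)
    assume "(\<lambda>i. vplus x n i div b i) \<noteq> w"
    then have "\<Phi> c (vplus x n) = \<Phi> c' (vplus x n)"
      by (intro \<Phi>_local assms(4))
    with n(2) show False by contradiction
  qed
  with n(1) show ?thesis by (auto simp: vplus_def)
qed

lemma changed_cell_in_block:
  assumes "c \<in> configs QG" and "global NG fG c \<noteq> c"
    and "\<And>z. z \<noteq> w \<Longrightarrow> global NG fG c z = c z"
  obtains x where "(\<lambda>i. x i div b i) = w" and "\<Phi> (global NG fG c) x \<noteq> \<Phi> c x"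
proof -
  have "\<Phi> (global NG fG c) \<noteq> \<Phi> c"
    using \<Phi>_inj[OF global_in_configs[OF G_CA assms(1)] assms(1)] assms(2) by blast
  then obtain x where x: "\<Phi> (global NG fG c) x \<noteq> \<Phi> c x" by blast
  have "(\<lambda>i. x i div b i) = w"
  proof (rule ccontr)
    assume "(\<lambda>i. x i div b i) \<noteq> w"
    then have "\<Phi> (global NG fG c) x = \<Phi> c x"
      by (intro \<Phi>_local assms(3))
    with x show False by contradiction
  qed
  then show ?thesis using x by (rule that)
qed

end

definition neg_unitv :: "'d \<Rightarrow> ('d \<Rightarrow> int)" where
  "neg_unitv i = (\<lambda>j. - unitv i j)"

lemma unitv_simps [simp]:
  "unitv i \<noteq> (\<lambda>_. 0)" "neg_unitv i \<noteq> (\<lambda>_. 0)" "unitv i \<noteq> neg_unitv j"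
  "unitv i = unitv j \<longleftrightarrow> i = j" "neg_unitv i = neg_unitv j \<longleftrightarrow> i = j"
  by (auto simp: unitv_def neg_unitv_def fun_eq_iff)

lemma VN_iff: "z \<in> VN \<longleftrightarrow> z = (\<lambda>_. 0) \<or> (\<exists>i. z = unitv i) \<or> (\<exists>i. z = neg_unitv i)"
  by (auto simp: VN_def neg_unitv_def)

lemma finite_VN: "finite (VN :: ('d::finite \<Rightarrow> int) set)"
  by (simp add: VN_def)

definition countdown :: "(('d \<Rightarrow> int) \<Rightarrow> nat) \<Rightarrow> nat" where
  "countdown p =
    (if 2 \<le> p (\<lambda>_. 0) \<and> (\<exists>j. p (unitv j) = 1 \<and> p (neg_unitv j) = 1)
     then p (\<lambda>_. 0) - 1 else p (\<lambda>_. 0))"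

lemma countdown_le: "countdown p \<le> p (\<lambda>_. 0)"
  by (simp add: countdown_def)

lemma global_countdown_le: "global VN countdown c z \<le> c z"
  using countdown_le[of "pattern c z VN"] by (simp add: global_def pattern_def VN_iff)

lemma countdown_is_CA: "is_CA {0..M} (VN :: ('d::finite \<Rightarrow> int) set) countdown"
proof -
  have "countdown p \<in> {0..M}" if "p \<in> VN \<rightarrow>\<^sub>E {0..M}" for p :: "('d \<Rightarrow> int) \<Rightarrow> nat"
    using that countdown_le[of p] by (auto simp: VN_iff dest!: PiE_mem[where x = "\<lambda>_. 0"])
  then show ?thesis unfolding is_CA_def using finite_VN by auto
qed

lemma countdown_freezing: "freezing {0..M} (VN :: ('d::finite \<Rightarrow> int) set) countdown"
  by (intro freezing_if_decreasing countdown_is_CA global_countdown_le)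

definition axis_config :: "nat \<Rightarrow> nat \<Rightarrow> nat \<Rightarrow> 'd \<Rightarrow> (('d \<Rightarrow> int) \<Rightarrow> nat)" where
  "axis_config s a b i =
    (\<lambda>z. if z = (\<lambda>_. 0) then s else if z = neg_unitv i then a else if z = unitv i then b else 0)"

lemma axis_config_in_configs:
  "s \<le> M \<Longrightarrow> a \<le> M \<Longrightarrow> b \<le> M \<Longrightarrow> axis_config s a b i \<in> configs {0..M}"
  by (auto simp: configs_def axis_config_def)

lemma global_axis_config:
  fixes i :: "'d::finite"
  assumes "2 \<le> s" and "a \<le> 1" and "b \<le> 1"
  shows "global VN countdown (axis_config s a b i) = axis_config (if a = 1 \<and> b = 1 then s - 1 else s) a b i"
proof
  fix z :: "'d \<Rightarrow> int"
  show "global VN countdown (axis_config s a b i) z = axis_config (if a = 1 \<and> b = 1 then s - 1 else s) a b i z"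
  proof (cases "z = (\<lambda>_. 0)")
    case True
    have "(\<exists>j. axis_config s a b i (unitv j) = 1 \<and> axis_config s a b i (neg_unitv j) = 1)
        \<longleftrightarrow> a = 1 \<and> b = 1"
      by (auto simp: axis_config_def)
    with True assms show ?thesis
      by (simp add: global_def countdown_def pattern_def VN_iff) (simp add: axis_config_def)
  next
    case False
    then have "axis_config s a b i z < 2" using assms by (auto simp: axis_config_def)
    with False show ?thesis
      by (simp add: global_def countdown_def pattern_def VN_iff) (simp add: axis_config_def)
  qed
qed

locale countdown_simulation =
  context_free_simulation QF NF fF R "{0..M}" VN countdown T b \<phi>
  for QF :: "'q set" and NF :: "('d::finite \<Rightarrow> int) set" and fF R and M :: nat and T b \<phi> +
  assumes two_le_M: "2 \<le> M"
begin

lemma block_width_less: "b i < 2 * radius NF"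
proof -
  let ?c = "axis_config 2 1 1 i"
  have "?c \<in> configs {0..M}" and "axis_config 2 0 1 i \<in> configs {0..M}"
    and "axis_config 2 1 0 i \<in> configs {0..M}"
    using two_le_M by (auto intro: axis_config_in_configs)
  note configs = this
  have counts_down: "global VN countdown ?c = axis_config 1 1 1 i"
    using global_axis_config[of 2 1 1 i] by simp
  have fixed: "global VN countdown (axis_config 2 0 1 i) = axis_config 2 0 1 i"
      "global VN countdown (axis_config 2 1 0 i) = axis_config 2 1 0 i"
    using global_axis_config[of 2 0 1 i] global_axis_config[of 2 1 0 i] by simp_all
  from counts_down have "global VN countdown ?c \<noteq> ?c"
    by (auto simp: axis_config_def dest: fun_cong[where x = "\<lambda>_. 0"])
  then have "global NF fF (\<Phi> ?c) \<noteq> \<Phi> ?c"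
    using fixed_iff_\<Phi>_fixed[OF configs(1)] by blast
  then obtain x where x: "global NF fF (\<Phi> ?c) x \<noteq> \<Phi> ?c x" by blast
  have "?c z = axis_config 2 1 0 i z" if "z \<noteq> unitv i" for z
    using that by (simp add: axis_config_def)
  from changed_cell_sees_block[OF configs(1,3) fixed(2) this x]
  obtain n where n: "n \<in> insert (\<lambda>_. 0) NF" and "(\<lambda>j. (x j + n j) div b j) = unitv i"
    by blast
  then have "(x i + n i) div b i = 1" by (auto simp: unitv_def fun_eq_iff)
  then have "b i \<le> x i + n i" using pos_imp_zdiv_pos_iff[OF b_pos, of "x i + n i" i] by simp
  have "?c z = axis_config 2 0 1 i z" if "z \<noteq> neg_unitv i" for z
    using that by (simp add: axis_config_def)
  from changed_cell_sees_block[OF configs(1,2) fixed(1) this x]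
  obtain n' where n': "n' \<in> insert (\<lambda>_. 0) NF" and "(\<lambda>j. (x j + n' j) div b j) = neg_unitv i"
    by blast
  then have "(x i + n' i) div b i = -1" by (auto simp: neg_unitv_def unitv_def fun_eq_iff)
  then have "x i + n' i < 0" using pos_imp_zdiv_neg_iff[OF b_pos, of "x i + n' i" i] by simp
  moreover have "\<bar>n i\<bar> \<le> radius NF" and "\<bar>n' i\<bar> \<le> radius NF"
    using abs_le_radius F.CA n n' by (auto simp: is_CA_def)
  ultimately show ?thesis using \<open>b i \<le> x i + n i\<close> by linarith
qed

lemma countdown_length_le: "M - 2 \<le> card (block b) * card QF"
proof -
  fix i :: 'd
  define c where "c k = axis_config (M - k) 1 1 i" for k
  have c_configs: "c k \<in> configs {0..M}" for k
    using two_le_M by (auto simp: c_def intro: axis_config_in_configs)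
  have c_step: "global VN countdown (c k) = c (Suc k)" if "k < M - 2" for k
  proof -
    have "2 \<le> M - k" using that by simp
    then show ?thesis
      using global_axis_config[of "M - k" 1 1 i] by (simp add: c_def)
  qed
  show ?thesis
  proof (rule descending_chain_length_le[OF F.order _ finite_block, where Y = "\<lambda>k. \<Phi> (c k)"])
    show "finite QF" using F.CA by (simp add: is_CA_def)
    fix k assume k: "k < M - 2"
    show "(\<Phi> (c (Suc k)) r, \<Phi> (c k) r) \<in> R" for r
      using \<Phi>_global_below[OF c_configs, of k r] unfolding c_step[OF k] .
    have "c (Suc k) (\<lambda>_. 0) \<noteq> c k (\<lambda>_. 0)"
      using k by (simp add: c_def axis_config_def)
    then have "global VN countdown (c k) \<noteq> c k"
      unfolding c_step[OF k] by (rule contrapos_nn) simp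
    moreover have "global VN countdown (c k) z = c k z" if "z \<noteq> (\<lambda>_. 0)" for z
      using that unfolding c_step[OF k] by (simp add: c_def axis_config_def)
    ultimately obtain x where "(\<lambda>i. x i div b i) = (\<lambda>_. 0)"
      and "\<Phi> (global VN countdown (c k)) x \<noteq> \<Phi> (c k) x"
      by (rule changed_cell_in_block[OF c_configs])
    then have "x \<in> block b" and "\<Phi> (c (Suc k)) x \<noteq> \<Phi> (c k) x"
      by (simp_all add: c_step[OF k] block_iff_div_eq_zero[OF b_pos])
    then show "\<exists>r \<in> block b. \<Phi> (c (Suc k)) r \<noteq> \<Phi> (c k) r" by blast
  qed
qed

end

theorem theorem4:
  shows "\<not> (\<exists>(QF :: 'q set) (NF :: ('d::finite \<Rightarrow> int) set) fF. is_CA QF NF fF \<and> freezing QF NF fF \<and>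
            (\<forall>(QG :: nat set) fG. is_CA QG (VN :: ('d \<Rightarrow> int) set) fG \<and> freezing QG VN fG \<longrightarrow>
               (\<exists>T b \<phi>. simulates QF NF fF QG VN fG T b {\<lambda>_. 0} \<phi>)))"
proof
  assume "\<exists>(QF :: 'q set) (NF :: ('d::finite \<Rightarrow> int) set) fF. is_CA QF NF fF \<and> freezing QF NF fF \<and>
            (\<forall>(QG :: nat set) fG. is_CA QG (VN :: ('d \<Rightarrow> int) set) fG \<and> freezing QG VN fG \<longrightarrow>
               (\<exists>T b \<phi>. simulates QF NF fF QG VN fG T b {\<lambda>_. 0} \<phi>))"
  then obtain QF :: "'q set" and NF :: "('d \<Rightarrow> int) set" and fF
    where "is_CA QF NF fF" and "freezing QF NF fF"
      and universal: "\<And>QG :: nat set. \<And>fG. is_CA QG VN fG \<Longrightarrow> freezing QG VN fG \<Longrightarrow>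
                        \<exists>T b \<phi>. simulates QF NF fF QG VN fG T b {\<lambda>_. 0} \<phi>"
    by blast
  then obtain R where "freezing_ca QF NF fF R"
    using freezing_ca_if_freezing by blast
  define M where "M = card QF * card (block (\<lambda>_::'d. 2 * radius NF)) + 3"
  obtain T b \<phi> where "simulates QF NF fF {0..M} VN countdown T b {\<lambda>_. 0} \<phi>"
    using universal countdown_is_CA countdown_freezing by blast
  then interpret countdown_simulation QF NF fF R M T b \<phi>
    using \<open>freezing_ca QF NF fF R\<close> countdown_is_CA
    by (auto simp: M_def countdown_simulation_def context_free_simulation_def
        context_free_simulation_axioms_def countdown_simulation_axioms_def)
  have "M - 2 \<le> card (block b) * card QF"
    by (rule countdown_length_le)
  also have "\<dots> \<le> card (block (\<lambda>_::'d. 2 * radius NF)) * card QF"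
    using block_width_less by (intro mult_right_mono card_block_mono) (auto simp: less_imp_le)
  finally show False
    by (simp add: M_def)
qed

end
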